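(* Let $R$ be a ring and let $A=\sigma(R)\langle x_1,\dots,x_n\rangle$ be a skew PBW extension of $R$, with associated families $\Sigma=\{\sigma_1,\dots,\sigma_n\}$ and $\Delta=\{\delta_1,\dots,\delta_n\}$. If $R$ is a Baer ring, $R$ is $(\Sigma,\Delta)$-compatible, and $R$ satisfies condition (SA1), then $A$ has Property $(a.c.)$ on the right.
   Context: All rings are associative with identity. For $S\subseteq T$ (a ring $T$), $r_T(S)=\{a\in T: Sa=0\}$ and $\ell_T(S)=\{a\in T: aS=0\}$. A ring $A$ is a skew PBW extension of $R$, written $A=\sigma(R)\langle x_1,\dots,x_n\rangle$, if: (i) $R$ is a subring of $A$ with the same identity; (ii) there are elements $x_1,\dots,x_n\in A$ such that $A$ is a free left $R$-module with basis the standard monomials $x^\alpha=x_1^{\alpha_1}\cdots x_n^{\alpha_n}$, $\alpha\in\mathbb N^n$ (with $x^0=1$); (iii) for each $i$ and each nonzero $r\in R$ there is nonzero $c_{i,r}\in R$ with $x_ir-c_{i,r}x_i\in R$; (iv) for all $i,j$ there is nonzero $d_{i,j}\in R$ with $x_jx_i-d_{i,j}x_ix_j\in R+Rx_1+\cdots+Rx_n$. For such $A$ there are injective endomorphisms $\sigma_i$ of $R$ and $\sigma_i$-derivations $\delta_i$ of $R$ with $x_ir=\sigma_i(r)x_i+\delta_i(r)$ for all $r\in R$; $\Sigma=\{\sigma_1,\dots,\sigma_n\}$, $\Delta=\{\delta_1,\dots,\delta_n\}$. For $\alpha\in\mathbb N^n$, $\sigma^\alpha=\sigma_1^{\alpha_1}\circ\cdots\circ\sigma_n^{\alpha_n}$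 and $\delta^\alpha=\delta_1^{\alpha_1}\circ\cdots\circ\delta_n^{\alpha_n}$. $R$ is $\Sigma$-compatible if for all $a,b\in R$ and $\alpha\in\mathbb N^n$: $a\sigma^\alpha(b)=0$ iff $ab=0$; $R$ is $\Delta$-compatible if for all $a,b\in R$ and $\beta\in\mathbb N^n$: $ab=0$ implies $a\delta^\beta(b)=0$; $(\Sigma,\Delta)$-compatible means both. $R$ satisfies condition (SA1) if whenever $fg=0$ for $f=a_0+a_1X_1+\cdots+a_mX_m$ and $g=b_0+b_1Y_1+\cdots+b_tY_t$ in $A$ (with $a_i,b_j\in R$ and $X_i,Y_j$ standard monomials), then $a_ib_j=0$ for all $i,j$. $R$ is a Baer ring if for every nonempty subset $X\subseteq R$ there is an idempotent $e$ with $r_R(X)=eR$. A ring $T$ has Property $(a.c.)$ on the right if for every finitely generated right ideal $I$ of $T$ there is $c\in T$ with $r_T(I)=r_T(cT)$; on the left if for every finitely generated left ideal $I$ there is $c\in T$ with $\ell_T(I)=\ell_T(Tc)$. *)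

theory Defs
  imports Main
begin

text \<open>Conventions: the ring A is the ambient type 'a (class ring_1); R is a subset of it.
 The variables x_1..x_n are represented as x 0, ..., x (n-1).
 Exponent vectors alpha in N^n are functions nat => nat vanishing from n on.\<close>

definition exps :: "nat \<Rightarrow> (nat \<Rightarrow> nat) set" where
  "exps n = {\<alpha>. \<forall>i\<ge>n. \<alpha> i = 0}"

definition mono :: "(nat \<Rightarrow> 'a::ring_1) \<Rightarrow> nat \<Rightarrow> (nat \<Rightarrow> nat) \<Rightarrow> 'a" where
  "mono x n \<alpha> = prod_list (map (\<lambda>i. x i ^ \<alpha> i) [0..<n])"

definition coeffs :: "'a::ring_1 set \<Rightarrow> nat \<Rightarrow> ((nat \<Rightarrow> nat) \<Rightarrow> 'a) \<Rightarrow> bool" where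
  "coeffs R n c \<longleftrightarrow> finite {\<alpha>. c \<alpha> \<noteq> 0} \<and> (\<forall>\<alpha>. c \<alpha> \<in> R) \<and> (\<forall>\<alpha>. c \<alpha> \<noteq> 0 \<longrightarrow> \<alpha> \<in> exps n)"

definition poly_of :: "(nat \<Rightarrow> 'a::ring_1) \<Rightarrow> nat \<Rightarrow> ((nat \<Rightarrow> nat) \<Rightarrow> 'a) \<Rightarrow> 'a" where
  "poly_of x n c = (\<Sum>\<alpha> \<in> {\<alpha>. c \<alpha> \<noteq> 0}. c \<alpha> * mono x n \<alpha>)"

definition subring_one :: "'a::ring_1 set \<Rightarrow> bool" where
  "subring_one R \<longleftrightarrow> 0 \<in> R \<and> 1 \<in> R \<and> (\<forall>a\<in>R. \<forall>b\<in>R. a + b \<in> R \<and> a * b \<in> R) \<and> (\<forall>a\<in>R. - a \<in> R)"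

definition lin1 :: "'a::ring_1 set \<Rightarrow> (nat \<Rightarrow> 'a) \<Rightarrow> nat \<Rightarrow> 'a set" where
  "lin1 R x n = {r0 + (\<Sum>k<n. r k * x k) | r0 r. r0 \<in> R \<and> (\<forall>k. r k \<in> R)}"

definition skew_PBW :: "'a::ring_1 set \<Rightarrow> (nat \<Rightarrow> 'a) \<Rightarrow> nat \<Rightarrow> bool" where
  "skew_PBW R x n \<longleftrightarrow>
     subring_one R \<and>
     (\<forall>a. \<exists>c. coeffs R n c \<and> a = poly_of x n c) \<and>
     (\<forall>c. coeffs R n c \<and> poly_of x n c = 0 \<longrightarrow> (\<forall>\<alpha>. c \<alpha> = 0)) \<and>
     (\<forall>i<n. \<forall>r\<in>R. r \<noteq> 0 \<longrightarrow> (\<exists>c\<in>R. c \<noteq> 0 \<and> x i * r - c * x i \<in> R)) \<and>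
     (\<forall>i<n. \<forall>j<n. \<exists>d\<in>R. d \<noteq> 0 \<and> x j * x i - d * x i * x j \<in> lin1 R x n)"

text \<open>sigma and delta are the maps with x_i r = sigma_i(r) x_i + delta_i(r) on R
 (they are uniquely determined by the skew PBW structure)\<close>
definition skew_maps :: "'a::ring_1 set \<Rightarrow> (nat \<Rightarrow> 'a) \<Rightarrow> nat \<Rightarrow> (nat \<Rightarrow> 'a \<Rightarrow> 'a) \<Rightarrow> (nat \<Rightarrow> 'a \<Rightarrow> 'a) \<Rightarrow> bool" where
  "skew_maps R x n \<sigma> \<delta> \<longleftrightarrow>
     (\<forall>i<n. \<forall>r\<in>R. \<sigma> i r \<in> R \<and> \<delta> i r \<in> R \<and> x i * r = \<sigma> i r * x i + \<delta> i r)"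

definition comp_pow :: "(nat \<Rightarrow> 'b \<Rightarrow> 'b) \<Rightarrow> nat \<Rightarrow> (nat \<Rightarrow> nat) \<Rightarrow> 'b \<Rightarrow> 'b" where
  "comp_pow f n \<alpha> = foldr (\<lambda>i g. (f i ^^ \<alpha> i) \<circ> g) [0..<n] id"

definition Sigma_compatible :: "'a::ring_1 set \<Rightarrow> nat \<Rightarrow> (nat \<Rightarrow> 'a \<Rightarrow> 'a) \<Rightarrow> bool" where
  "Sigma_compatible R n \<sigma> \<longleftrightarrow>
     (\<forall>a\<in>R. \<forall>b\<in>R. \<forall>\<alpha>\<in>exps n. a * comp_pow \<sigma> n \<alpha> b = 0 \<longleftrightarrow> a * b = 0)"

definition Delta_compatible :: "'a::ring_1 set \<Rightarrow> nat \<Rightarrow> (nat \<Rightarrow> 'a \<Rightarrow> 'a) \<Rightarrow> bool" where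
  "Delta_compatible R n \<delta> \<longleftrightarrow>
     (\<forall>a\<in>R. \<forall>b\<in>R. \<forall>\<beta>\<in>exps n. a * b = 0 \<longrightarrow> a * comp_pow \<delta> n \<beta> b = 0)"

definition SA1 :: "'a::ring_1 set \<Rightarrow> (nat \<Rightarrow> 'a) \<Rightarrow> nat \<Rightarrow> bool" where
  "SA1 R x n \<longleftrightarrow>
     (\<forall>c d. coeffs R n c \<and> coeffs R n d \<and> poly_of x n c * poly_of x n d = 0
        \<longrightarrow> (\<forall>\<alpha> \<beta>. c \<alpha> * d \<beta> = 0))"

definition r_ann :: "'a::ring_1 set \<Rightarrow> 'a set \<Rightarrow> 'a set" where
  "r_ann T S = {a \<in> T. \<forall>s\<in>S. s * a = 0}"

definition Baer_subring :: "'a::ring_1 set \<Rightarrow> bool" where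
  "Baer_subring R \<longleftrightarrow>
     (\<forall>X. X \<subseteq> R \<and> X \<noteq> {} \<longrightarrow> (\<exists>e\<in>R. e * e = e \<and> r_ann R X = {e * r | r. r \<in> R}))"

definition right_ideal_gen :: "'a::ring_1 set \<Rightarrow> 'a set" where
  "right_ideal_gen F = {(\<Sum>f\<in>F. f * a f) | a. True}"

definition right_ac :: "'a::ring_1 itself \<Rightarrow> bool" where
  "right_ac _ \<longleftrightarrow>
     (\<forall>F :: 'a set. finite F \<longrightarrow>
        (\<exists>c. r_ann UNIV (right_ideal_gen F) = r_ann UNIV {c * t | t. True}))"

end

theory Submission
  imports Defs
begin

text \<open>
  In fact A is a Baer ring. Given S \<subseteq> A, let X \<subseteq> R be the set of coefficients of the
  elements of S, and let r_R(X) = eR with e idempotent. By (SA1) every coefficient of an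
  element z of r_A(S) lies in r_R(X) = eR, so z = ez \<in> eA. Conversely, compatibility
  lets a zero product a e = 0 survive the insertion of any standard monomial, a x^\<alpha> e = 0,
  so every element of S kills e and eA \<subseteq> r_A(S). For a right ideal I the annihilator
  r_A(I) = eA is also a left ideal, whence t e = e t e for all t and eA = r_A((1 - e)A).
\<close>

lemma foldr_comp_pow_unit:
  "distinct xs \<Longrightarrow> foldr (\<lambda>j g. (f j ^^ (if j = i then 1 else 0)) \<circ> g) xs id
     = (if i \<in> set xs then f i else id)"
  by (induction xs) auto

lemma comp_pow_unit:
  assumes "i < n"
  shows "comp_pow f n (\<lambda>j. if j = i then 1 else 0) = f i"
  using foldr_comp_pow_unit[where xs="[0..<n]" and f=f and i=i] assms by (simp add: comp_pow_def)

lemma unit_in_exps: "i < n \<Longrightarrow> (\<lambda>j. if j = i then 1 else 0) \<in> exps n"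
  by (auto simp: exps_def)

lemma Sigma_compatible_zero_product:
  assumes "Sigma_compatible R n \<sigma>" "i < n" "a \<in> R" "b \<in> R" "a * b = 0"
  shows "a * \<sigma> i b = 0"
  using assms comp_pow_unit[of i n \<sigma>] unit_in_exps[of i n]
  unfolding Sigma_compatible_def by metis

lemma Delta_compatible_zero_product:
  assumes "Delta_compatible R n \<delta>" "i < n" "a \<in> R" "b \<in> R" "a * b = 0"
  shows "a * \<delta> i b = 0"
  using assms comp_pow_unit[of i n \<delta>] unit_in_exps[of i n]
  unfolding Delta_compatible_def by metis

definition preserves_zero_products :: "'a::ring_1 set \<Rightarrow> 'a \<Rightarrow> bool" where
  "preserves_zero_products R m \<longleftrightarrow> (\<forall>a\<in>R. \<forall>r\<in>R. a * r = 0 \<longrightarrow> a * m * r = 0)"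

lemma preserves_zero_products_mult_var:
  assumes maps: "skew_maps R x n \<sigma> \<delta>"
    and "Sigma_compatible R n \<sigma>" "Delta_compatible R n \<delta>"
    and m: "preserves_zero_products R m" and j: "j < n"
  shows "preserves_zero_products R (m * x j)"
  unfolding preserves_zero_products_def
proof (intro ballI impI)
  fix a r assume a: "a \<in> R" and r: "r \<in> R" and ar: "a * r = 0"
  have x_r: "x j * r = \<sigma> j r * x j + \<delta> j r" and "\<sigma> j r \<in> R" "\<delta> j r \<in> R"
    using maps j r unfolding skew_maps_def by auto
  moreover have "a * \<sigma> j r = 0" "a * \<delta> j r = 0"
    using assms(2,3) j a r ar
    by (auto intro: Sigma_compatible_zero_product Delta_compatible_zero_product)
  ultimately have "a * m * \<sigma> j r = 0" "a * m * \<delta> j r = 0"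
    using m a unfolding preserves_zero_products_def by auto
  moreover have "a * (m * x j) * r = (a * m * \<sigma> j r) * x j + a * m * \<delta> j r"
    by (simp add: x_r mult.assoc distrib_left)
  ultimately show "a * (m * x j) * r = 0" by simp
qed

lemma preserves_zero_products_mono:
  assumes "skew_maps R x n \<sigma> \<delta>" "Sigma_compatible R n \<sigma>" "Delta_compatible R n \<delta>"
  shows "preserves_zero_products R (mono x n \<alpha>)"
proof -
  have power: "preserves_zero_products R (m * x j ^ k)"
    if "preserves_zero_products R m" "j < n" for m j k
    using that
  proof (induction k)
    case (Suc k)
    then have "preserves_zero_products R ((m * x j ^ k) * x j)"
      by (intro preserves_zero_products_mult_var[OF assms])
    then show ?case by (metis power_Suc2 mult.assoc)
  qed simp
  have "preserves_zero_products R (prod_list (map (\<lambda>i. x i ^ \<alpha> i) [0..<k]))" if "k \<le> n" for k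
    using that
  proof (induction k)
    case (Suc k)
    then show ?case by (simp add: power)
  qed (simp add: preserves_zero_products_def)
  then show ?thesis unfolding mono_def by simp
qed

lemma poly_of_mult_right_eq_0:
  assumes "skew_maps R x n \<sigma> \<delta>" "Sigma_compatible R n \<sigma>" "Delta_compatible R n \<delta>"
    and c: "coeffs R n c" and e: "e \<in> R" and ce: "\<And>\<alpha>. c \<alpha> * e = 0"
  shows "poly_of x n c * e = 0"
proof -
  have "c \<alpha> * mono x n \<alpha> * e = 0" for \<alpha>
    using preserves_zero_products_mono[OF assms(1-3)] c e ce
    unfolding preserves_zero_products_def coeffs_def by blast
  then show ?thesis unfolding poly_of_def by (simp add: sum_distrib_right)
qed

lemma poly_of_mult_left_idempotent:
  assumes "\<And>\<beta>. e * d \<beta> = d \<beta>"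
  shows "e * poly_of x n d = poly_of x n d"
  using assms by (simp add: poly_of_def sum_distrib_left mult.assoc[symmetric])

lemma SA1_coeffs_in_r_ann:
  assumes SA1: "SA1 R x n" and d: "coeffs R n d" and "poly_of x n d \<in> r_ann UNIV S"
  shows "d \<beta> \<in> r_ann R (insert 0 {c \<alpha> | c \<alpha>. coeffs R n c \<and> poly_of x n c \<in> S})"
proof -
  have "c \<alpha> * d \<beta> = 0" if "coeffs R n c" "poly_of x n c \<in> S" for c \<alpha>
  proof -
    have "poly_of x n c * poly_of x n d = 0" using assms(3) that unfolding r_ann_def by auto
    then show ?thesis using SA1 d that unfolding SA1_def by blast
  qed
  then show ?thesis using d unfolding r_ann_def coeffs_def by auto
qed

theorem skew_PBW_r_ann_eq_idempotent:
  fixes R S :: "'a::ring_1 set"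
  assumes pbw: "skew_PBW R x n" and maps: "skew_maps R x n \<sigma> \<delta>"
    and Baer: "Baer_subring R"
    and compat: "Sigma_compatible R n \<sigma>" "Delta_compatible R n \<delta>"
    and SA1: "SA1 R x n"
  shows "\<exists>e. e * e = e \<and> r_ann UNIV S = {e * t | t. True}"
proof -
  have sub: "subring_one R" and expand: "\<And>a. \<exists>c. coeffs R n c \<and> a = poly_of x n c"
    using pbw unfolding skew_PBW_def by auto
  \<comment> \<open>0 keeps X nonempty when S is empty, as the Baer property of R requires\<close>
  define X where "X = insert 0 {c \<alpha> | c \<alpha>. coeffs R n c \<and> poly_of x n c \<in> S}"
  have "X \<subseteq> R" using sub unfolding X_def coeffs_def subring_one_def by auto
  then obtain e where "e \<in> R" and idem: "e * e = e" and ann: "r_ann R X = {e * r | r. r \<in> R}"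
    using Baer unfolding Baer_subring_def X_def by blast
  have "e \<in> r_ann R X" using ann \<open>e \<in> R\<close> sub by (force simp: subring_one_def)
  then have coeff_e: "c \<alpha> * e = 0" if "coeffs R n c" "poly_of x n c \<in> S" for c \<alpha>
    using that unfolding r_ann_def X_def by blast
  have "r_ann UNIV S = {e * t | t. True}"
  proof (intro equalityI subsetI)
    fix z assume z: "z \<in> r_ann UNIV S"
    obtain d where d: "coeffs R n d" and zd: "z = poly_of x n d" using expand by blast
    have "d \<beta> \<in> r_ann R X" for \<beta>
      using SA1_coeffs_in_r_ann[OF SA1 d] z zd unfolding X_def by blast
    then have "e * d \<beta> = d \<beta>" for \<beta>
      using ann idem by (auto simp: mult.assoc[symmetric]) (metis mult.assoc)
    then have "z = e * z" unfolding zd by (simp add: poly_of_mult_left_idempotent)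
    then show "z \<in> {e * t | t. True}" by blast
  next
    fix z assume "z \<in> {e * t | t. True}"
    then obtain t where zt: "z = e * t" by auto
    have "h * e = 0" if "h \<in> S" for h
      using expand[of h] poly_of_mult_right_eq_0[OF maps compat _ \<open>e \<in> R\<close>] coeff_e that
      by metis
    then show "z \<in> r_ann UNIV S" unfolding r_ann_def zt by (simp add: mult.assoc[symmetric])
  qed
  with idem show ?thesis by blast
qed

lemma r_ann_right_ideal_idempotent:
  fixes e :: "'a::ring_1"
  assumes right_ideal: "\<And>h t. h \<in> I \<Longrightarrow> h * t \<in> I"
    and idem: "e * e = e" and ann: "r_ann UNIV I = {e * t | t. True}"
  shows "r_ann UNIV I = r_ann UNIV {(1 - e) * t | t. True}"
proof -
  have "e \<in> r_ann UNIV I" using ann by (metis (mono_tags, lifting) CollectI mult_1_right)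
  then have "t * e \<in> r_ann UNIV I" for t
    using right_ideal unfolding r_ann_def by (simp add: mult.assoc[symmetric])
  then have te: "t * e = e * t * e" for t
    using ann idem by (auto simp: mult.assoc[symmetric]) (metis mult.assoc)
  have "z \<in> r_ann UNIV {(1 - e) * t | t. True} \<longleftrightarrow> z = e * z" for z
  proof
    assume "z \<in> r_ann UNIV {(1 - e) * t | t. True}"
    then have "(1 - e) * 1 * z = 0" unfolding r_ann_def by blast
    then show "z = e * z" by (simp add: algebra_simps)
  next
    assume z: "z = e * z"
    have "(1 - e) * t * z = (t * e - e * t * e) * z" for t
      by (subst z) (simp add: algebra_simps)
    then show "z \<in> r_ann UNIV {(1 - e) * t | t. True}"
      unfolding r_ann_def using te by auto
  qed
  moreover have "z \<in> r_ann UNIV I \<longleftrightarrow> z = e * z" for z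
    using ann idem by (auto simp: mult.assoc[symmetric])
  ultimately show ?thesis by blast
qed

lemma right_ideal_gen_mult_right:
  assumes "h \<in> right_ideal_gen F"
  shows "h * t \<in> right_ideal_gen F"
proof -
  obtain a where "h = (\<Sum>f\<in>F. f * a f)"
    using assms unfolding right_ideal_gen_def by auto
  then have "h * t = (\<Sum>f\<in>F. f * (a f * t))" by (simp add: sum_distrib_right mult.assoc)
  then show ?thesis unfolding right_ideal_gen_def by (intro CollectI exI[of _ "\<lambda>f. a f * t"]) simp
qed

theorem mainTheorem1:
  fixes R :: "'a::ring_1 set" and x :: "nat \<Rightarrow> 'a" and n :: nat
    and \<sigma> \<delta> :: "nat \<Rightarrow> 'a \<Rightarrow> 'a"
  assumes "skew_PBW R x n"
    and "skew_maps R x n \<sigma> \<delta>"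
    and "Baer_subring R"
    and "Sigma_compatible R n \<sigma>"
    and "Delta_compatible R n \<delta>"
    and "SA1 R x n"
  shows "right_ac TYPE('a)"
  unfolding right_ac_def
proof (intro allI impI)
  fix F :: "'a set"
  obtain e where "e * e = e" and "r_ann UNIV (right_ideal_gen F) = {e * t | t. True}"
    using skew_PBW_r_ann_eq_idempotent[OF assms] by blast
  then have "r_ann UNIV (right_ideal_gen F) = r_ann UNIV {(1 - e) * t | t. True}"
    by (intro r_ann_right_ideal_idempotent right_ideal_gen_mult_right)
  then show "\<exists>c. r_ann UNIV (right_ideal_gen F) = r_ann UNIV {c * t | t. True}" by blast
qed

end
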